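(* Let $S$ be an invariant star in $\mathbb{R}^N$ with internal vertex $0$, external vertices $\vec v_1,\dots,\vec v_n$ and invariant constant $\gamma$. Suppose the centre of mass $\frac1n\sum_\ell\vec v_\ell$ is non-zero, let $b>0$ be its distance from the origin and $\vec e=\sum_\ell\vec v_\ell/\|\sum_\ell\vec v_\ell\|$. For any real $x\ne-nb$, the star with internal vertex $0$ and the $n+1$ external vertices $\vec v_1,\dots,\vec v_n,x\vec e$ is invariant, with invariant constant $$\tilde\gamma=\frac{(n+1)(x^2+nb^2\gamma)}{(x+nb)^2}.$$
   Context: Let $P:\mathbb{R}^N\to\mathbb{C}$, $P(y_1,\dots,y_N)=y_1+iy_2$. A star in $\mathbb{R}^N$ with internal vertex $0$ and external vertices $\vec x_1,\dots,\vec x_m$ is invariant, with invariant constant $\gamma\in\mathbb{R}$, if for every orthogonal transformation $A$ of $\mathbb{R}^N$, setting $z_\ell=P(A\vec x_\ell)$, one has $\frac{\gamma}{m}\big(\sum_\ell z_\ell\big)^2=\sum_\ell z_\ell^2$. *)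

theory Defs
  imports "HOL-Analysis.Analysis"
begin

(* Coordinates of R^N = real^'n are indexed by a finite well-ordered type 'n;
   the first and second coordinates are the least and second-least index. *)
definition coord1 :: "'n::{finite,wellorder}" where
  "coord1 = (LEAST i. True)"

definition coord2 :: "'n::{finite,wellorder}" where
  "coord2 = (LEAST i. i \<noteq> coord1)"

definition Pc :: "real ^ 'n::{finite,wellorder} \<Rightarrow> complex" where
  "Pc y = Complex (y $ coord1) (y $ coord2)"

(* A star with internal vertex 0 and external vertices xs (a list, m = length xs)
   is invariant with invariant constant gamma. *)
definition invariant_star :: "(real ^ 'n::{finite,wellorder}) list \<Rightarrow> real \<Rightarrow> bool" where
  "invariant_star xs \<gamma> \<longleftrightarrow>
     (\<forall>A :: real ^ 'n::{finite,wellorder} \<Rightarrow> real ^ 'n::{finite,wellorder}. orthogonal_transformation A \<longrightarrow>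
        (let zs = map (\<lambda>x. Pc (A x)) xs in
           complex_of_real (\<gamma> / real (length xs)) * (sum_list zs)\<^sup>2
           = sum_list (map (\<lambda>z. z\<^sup>2) zs)))"

end

theory Submission
  imports Defs
begin

(* For an orthogonal map A put f = Pc o A; f is real-linear, so with
   Z = f(v_1) + ... + f(v_n) and Q = f(v_1)^2 + ... + f(v_n)^2 invariance of the
   star says (gamma/n) Z^2 = Q.  The new vertex x e is a real multiple t S of the
   vector sum S = v_1 + ... + v_n, namely t = x / (n b), hence f(x e) = t Z.  The
   enlarged star therefore has vertex sum (1 + t) Z and sum of squares Q + t^2 Z^2,
   and it is invariant with constant gamma' exactly when
   gamma' / (n+1) (1 + t)^2 = gamma / n + t^2.
   The file first shows that Pc is real-linear and commutes with list sums, then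
   proves the general statement that appending any real multiple t S (t <> -1)
   of the vertex sum preserves invariance, with constant
   (n+1) (gamma/n + t^2) / (1+t)^2.  The theorem lemmaA1 is the special case
   t = x / (n b), after rewriting that constant in terms of x and b. *)

lemma linear_Pc: "linear (Pc :: real ^ 'n::{finite,wellorder} \<Rightarrow> complex)"
  by (rule linearI) (simp_all add: Pc_def complex_eq_iff)

lemma linear_sum_list:
  assumes "linear f"
  shows "f (sum_list xs) = sum_list (map f xs)"
  by (induction xs) (simp_all add: linear_add[OF assms] linear_0[OF assms])

lemma invariant_star_append_multiple_of_sum:
  fixes vs :: "(real ^ 'n::{finite,wellorder}) list" and \<gamma> t :: real
  defines "n \<equiv> real (length vs)"
  assumes inv: "invariant_star vs \<gamma>" and ne: "vs \<noteq> []" and t: "t \<noteq> -1"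
  shows "invariant_star (vs @ [t *\<^sub>R sum_list vs]) ((n + 1) * (\<gamma> / n + t\<^sup>2) / (1 + t)\<^sup>2)"
  unfolding invariant_star_def Let_def
proof (intro allI impI)
  fix A :: "(real, 'n) vec \<Rightarrow> (real, 'n) vec"
  assume orth: "orthogonal_transformation A"
  define f where "f = (\<lambda>v. Pc (A v))"
  have lin_f: "linear f"
    unfolding f_def using linear_compose[OF orthogonal_transformation_linear[OF orth] linear_Pc]
    by (simp add: o_def)
  define Z where "Z = sum_list (map f vs)"
  define Q where "Q = sum_list (map (\<lambda>z. z\<^sup>2) (map f vs))"
  have old: "complex_of_real (\<gamma> / n) * Z\<^sup>2 = Q"
    using inv orth unfolding invariant_star_def Let_def Z_def Q_def n_def f_def by blast
  have new_vertex: "f (t *\<^sub>R sum_list vs) = complex_of_real t * Z"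
    unfolding linear_scale[OF lin_f] linear_sum_list[OF lin_f] Z_def
    by (simp add: scaleR_conv_of_real)
  have n_pos: "n > 0" using ne by (simp add: n_def)
  have rescaled: "(n + 1) * (\<gamma> / n + t\<^sup>2) / (1 + t)\<^sup>2 / (n + 1) * (1 + t)\<^sup>2 = \<gamma> / n + t\<^sup>2"
    using n_pos t by (simp add: add_eq_0_iff)
  have "complex_of_real ((n + 1) * (\<gamma> / n + t\<^sup>2) / (1 + t)\<^sup>2 / (n + 1)) * ((1 + complex_of_real t) * Z)\<^sup>2
      = complex_of_real ((n + 1) * (\<gamma> / n + t\<^sup>2) / (1 + t)\<^sup>2 / (n + 1) * (1 + t)\<^sup>2) * Z\<^sup>2"
    by (simp add: power_mult_distrib)
  also have "\<dots> = Q + (complex_of_real t * Z)\<^sup>2"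
    unfolding rescaled old[symmetric] by (simp add: algebra_simps power_mult_distrib)
  finally show "complex_of_real ((n + 1) * (\<gamma> / n + t\<^sup>2) / (1 + t)\<^sup>2
        / real (length (vs @ [t *\<^sub>R sum_list vs])))
      * (sum_list (map (\<lambda>x. Pc (A x)) (vs @ [t *\<^sub>R sum_list vs])))\<^sup>2
      = sum_list (map (\<lambda>z. z\<^sup>2) (map (\<lambda>x. Pc (A x)) (vs @ [t *\<^sub>R sum_list vs])))"
    using new_vertex by (simp add: f_def[symmetric] Z_def[symmetric] Q_def n_def algebra_simps)
qed

theorem lemmaA1:
  fixes vs :: "(real ^ 'n::{finite,wellorder}) list"
    and \<gamma> x b :: real and e :: "real ^ 'n::{finite,wellorder}"
  assumes "CARD('n) \<ge> 2"
    and "vs \<noteq> []"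
    and "invariant_star vs \<gamma>"
    and "sum_list vs \<noteq> 0"
    and "b = norm ((1 / real (length vs)) *\<^sub>R sum_list vs)"
    and "e = (1 / norm (sum_list vs)) *\<^sub>R sum_list vs"
    and "x \<noteq> - real (length vs) * b"
  shows "invariant_star (vs @ [x *\<^sub>R e])
           ((real (length vs) + 1) * (x\<^sup>2 + real (length vs) * b\<^sup>2 * \<gamma>)
              / (x + real (length vs) * b)\<^sup>2)"
proof -
  define n where "n = real (length vs)"
  define t where "t = x / (n * b)"
  have n_pos: "n > 0" using assms(2) by (simp add: n_def)
  have norm_sum: "norm (sum_list vs) = n * b" using assms(5) n_pos by (simp add: n_def)
  have nb_pos: "n * b > 0" using norm_sum assms(4) by (metis zero_less_norm_iff)
  have b_pos: "b > 0" using nb_pos n_pos by (simp add: zero_less_mult_iff)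
  have vertex: "x *\<^sub>R e = t *\<^sub>R sum_list vs" by (simp add: assms(6) norm_sum t_def)
  have t_ne: "t \<noteq> -1"
  proof
    assume "t = -1"
    moreover have "x = t * (n * b)" using nb_pos unfolding t_def by force
    ultimately show False using assms(7) by (simp add: n_def)
  qed
  have one_plus_t: "1 + t = (x + n * b) / (n * b)"
    using nb_pos by (auto simp: t_def add_divide_distrib)
  have quadratic: "\<gamma> / n + t\<^sup>2 = (x\<^sup>2 + n * b\<^sup>2 * \<gamma>) / (n * b)\<^sup>2"
    using n_pos b_pos by (simp add: t_def field_simps power2_eq_square)
  have "(n + 1) * (\<gamma> / n + t\<^sup>2) / (1 + t)\<^sup>2 = (n + 1) * (x\<^sup>2 + n * b\<^sup>2 * \<gamma>) / (x + n * b)\<^sup>2"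
    unfolding one_plus_t quadratic using n_pos b_pos by (simp add: power_divide)
  with invariant_star_append_multiple_of_sum[OF assms(3) assms(2) t_ne]
  show ?thesis by (simp add: vertex n_def)
qed

end
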